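(* (1) For every $n\in\mathbb{N}$, the alternate Lyndon system $M(u_n\overline{v_n})$, i.e. the set of infinite binary words $x$ with $u_n\overline{v_n}\preceq x_kx_{k+1}\cdots$ for all $k\ge1$, has nonzero (positive) entropy. (2) The alternate Lyndon system $M(\phi^\infty(1))$ associated to $\phi^\infty(1)$ has entropy zero.
   Context: Alternate order: for two words $x=x_1x_2\cdots$, $y=y_1y_2\cdots$ over a finite alphabet of integers, $x\prec y$ iff there is $k$ with $x_i=y_i$ for all $i<k$ and $(-1)^k(x_k-y_k)<0$; $x\preceq y$ iff $x=y$ or $x\prec y$. For an infinite word $(d_i)$, its alternate Lyndon system $M((d_i))$ is the set of infinite words $x$ over $\{0,\dots,d_1\}$ with $d_1d_2\cdots\preceq x_kx_{k+1}\cdots$ for all $k\ge1$; its entropy is $\lim_{n\to\infty}\frac1n\log H_n$, $H_n$ the number of words of length $n$ occurring as finite factors of elements of the system. $\phi$ is the morphism on $\{0,1\}^*$ with $\phi(0)=1$, $\phi(1)=100$; $\phi^\infty(1)=\lim_n\phi^n(1)$. Set $u_n=\phi^n(1)$ for $n\ge0$, $v_0=00$ and $v_n=u_{n-1}u_{n-1}$ for $n>0$. For a finite word $w$, $\overline{w}=www\cdots$. *)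

theory Defs
  imports Complex_Main
begin

text \<open>Infinite words are functions nat => nat; position i (0-based) corresponds to
  the paper's position i+1 (1-based).\<close>

definition alt_less :: "(nat \<Rightarrow> nat) \<Rightarrow> (nat \<Rightarrow> nat) \<Rightarrow> bool" where
  "alt_less x y \<longleftrightarrow> (\<exists>k::nat. (\<forall>i<k. x i = y i) \<and>
      (-1::int) ^ (k + 1) * (int (x k) - int (y k)) < 0)"

definition alt_le :: "(nat \<Rightarrow> nat) \<Rightarrow> (nat \<Rightarrow> nat) \<Rightarrow> bool" where
  "alt_le x y \<longleftrightarrow> x = y \<or> alt_less x y"

definition alt_lyndon :: "(nat \<Rightarrow> nat) \<Rightarrow> (nat \<Rightarrow> nat) set" where
  "alt_lyndon d = {x. (\<forall>i. x i \<le> d 0) \<and> (\<forall>k. alt_le d (\<lambda>i. x (k + i)))}"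

definition factors :: "(nat \<Rightarrow> nat) set \<Rightarrow> nat \<Rightarrow> nat list set" where
  "factors M n = {w. \<exists>x\<in>M. \<exists>k. w = map (\<lambda>i. x (k + i)) [0..<n]}"

definition entropy_tends :: "(nat \<Rightarrow> nat) set \<Rightarrow> real \<Rightarrow> bool" where
  "entropy_tends M h \<longleftrightarrow> ((\<lambda>n. ln (real (card (factors M n))) / real n) \<longlonglongrightarrow> h)"

fun phi_letter :: "nat \<Rightarrow> nat list" where
  "phi_letter 0 = [1]"
| "phi_letter _ = [1, 0, 0]"

definition phi :: "nat list \<Rightarrow> nat list" where
  "phi w = concat (map phi_letter w)"

definition u :: "nat \<Rightarrow> nat list" where
  "u n = (phi ^^ n) [1]"

definition v :: "nat \<Rightarrow> nat list" where
  "v n = (if n = 0 then [0, 0] else u (n - 1) @ u (n - 1))"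

definition eventually_periodic :: "nat list \<Rightarrow> nat list \<Rightarrow> nat \<Rightarrow> nat" where
  "eventually_periodic p q i =
     (if i < length p then p ! i else q ! ((i - length p) mod length q))"

text \<open>phi^infinity(1): the limit of the words u n; u (i+1) has length > i and
  each u n is a prefix of u (n+1).\<close>
definition phi_inf :: "nat \<Rightarrow> nat" where
  "phi_inf i = u (Suc i) ! i"

end

theory Submission
  imports Defs "HOL-Library.Omega_Words_Fun" "HOL-Real_Asymp.Real_Asymp"
begin

text \<open>
  Every \<open>\<phi>\<close>-image of a letter has odd length, and
  \<open>\<phi>(1\<dots>) = 100\<dots>\<close> and \<open>\<phi>(0\<dots>) = 11\<dots>\<close> first differ at the second letter, so \<open>\<phi>\<close> is
  strictly increasing for the alternate order on binary words; and every suffix of \<open>\<phi>(x)\<close>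
  beginning with \<open>1\<close> is the image of a suffix of \<open>x\<close>, while suffixes beginning with \<open>0\<close> are
  harmless. Hence
  \<open>x \<in> M(d)\<close> implies \<open>\<phi>(x) \<in> M(\<phi>(d))\<close> for binary \<open>d\<close> with \<open>d\<^sub>1 = 1\<close>, and every \<open>\<phi>(y)\<close> lies in
  \<open>M(1000\<dots>)\<close>.

  (1) Since \<open>u\<^sub>n v\<^sub>n v\<^sub>n \<dots> = \<phi>\<^sup>n(1000\<dots>)\<close>, the system \<open>M(u\<^sub>n v\<^sub>n v\<^sub>n \<dots>)\<close> contains \<open>\<phi>\<^bsup>n+1\<^esub>(y)\<close>
  for every \<open>y\<close>, hence all \<open>2\<^sup>k\<close> concatenations of \<open>k\<close> blocks \<open>\<phi>\<^bsup>n+1\<^esub>(01)\<close>, \<open>\<phi>\<^bsup>n+1\<^esub>(10)\<close>, all of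
  length \<open>L = |\<phi>\<^bsup>n+1\<^esub>(01)|\<close>. The entropy exists by Fekete's lemma and is at least \<open>ln 2 / L\<close>.

  (2) For \<open>d = \<phi>\<^sup>\<infinity>(1) = \<phi>(d)\<close> the converse holds as well: \<open>d\<close> begins with \<open>1001\<close>, so in a word
  of \<open>M(d)\<close> a factor \<open>10\<close> continues as \<open>1001\<close>, and the word parses greedily into blocks
  \<open>1 = \<phi>(0)\<close> and \<open>100 = \<phi>(1)\<close>. Thus every word of \<open>M(d)\<close> is \<open>000\<dots>\<close> or \<open>0\<^sup>a \<phi>(y)\<close> with
  \<open>y \<in> M(d)\<close>. Applying this twice, a factor of length \<open>n\<close> is determined by two numbers \<open>\<le> n\<close> and
  a factor of length \<open>\<lceil>n/3\<rceil>\<close>, so \<open>H\<^sub>n \<le> 2 (n + 1)\<^bsup>2 \<lceil>log\<^sub>3 n\<rceil>\<^esub>\<close> and the entropy vanishes.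
\<close>

subsection \<open>The alternate order\<close>

lemma alt_less_iff:
  "alt_less x y \<longleftrightarrow> (\<exists>k. (\<forall>i<k. x i = y i) \<and> (if even k then y k < x k else x k < y k))"
proof -
  have "(-1::int) ^ (k + 1) * z < 0 \<longleftrightarrow> (if even k then 0 < z else z < 0)" for k z
    by (cases "even k") (auto simp: power_add)
  then show ?thesis
    unfolding alt_less_def by auto
qed

lemma alt_lessI:
  "(\<And>i. i < k \<Longrightarrow> x i = y i) \<Longrightarrow> (if even k then y k < x k else x k < y k) \<Longrightarrow> alt_less x y"
  unfolding alt_less_iff by blast

lemma alt_less_asym: "alt_less x y \<Longrightarrow> \<not> alt_less y x"
  unfolding alt_less_iff by (metis linorder_neqE_nat not_less_iff_gr_or_eq)

lemma alt_less_irrefl: "\<not> alt_less x x"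
  using alt_less_asym by blast

lemma alt_less_linear: "x \<noteq> y \<Longrightarrow> alt_less x y \<or> alt_less y x"
proof -
  assume "x \<noteq> y"
  then have "\<exists>i. x i \<noteq> y i" by auto
  define k where "k = (LEAST i. x i \<noteq> y i)"
  have "x k \<noteq> y k"
    unfolding k_def using \<open>\<exists>i. x i \<noteq> y i\<close> by (rule LeastI_ex)
  moreover have "\<forall>i<k. x i = y i"
    unfolding k_def using not_less_Least by blast
  ultimately show ?thesis
    by (metis alt_lessI linorder_neqE_nat)
qed

lemma not_alt_le_iff: "\<not> alt_le x y \<longleftrightarrow> alt_less y x"
  unfolding alt_le_def using alt_less_asym alt_less_linear by blast

lemma alt_less_of_head_less: "y 0 < x 0 \<Longrightarrow> alt_less x y"
  by (rule alt_lessI[of 0]) auto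

lemma alt_less_Cons_conc_iff: "alt_less ([a] \<frown> x) ([a] \<frown> y) \<longleftrightarrow> alt_less y x"
proof
  assume "alt_less ([a] \<frown> x) ([a] \<frown> y)"
  then obtain k where k: "\<forall>i<k. ([a] \<frown> x) i = ([a] \<frown> y) i"
    "if even k then ([a] \<frown> y) k < ([a] \<frown> x) k else ([a] \<frown> x) k < ([a] \<frown> y) k"
    unfolding alt_less_iff by blast
  then obtain k' where "k = Suc k'"
    by (cases k) auto
  with k show "alt_less y x"
    by (intro alt_lessI[of k']) (auto split: if_splits)
next
  assume "alt_less y x"
  then obtain k where k: "\<forall>i<k. y i = x i" "if even k then x k < y k else y k < x k"
    unfolding alt_less_iff by blast
  then show "alt_less ([a] \<frown> x) ([a] \<frown> y)"
    by (intro alt_lessI[of "Suc k"]) (auto simp: less_Suc_eq_0_disj)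
qed

lemma alt_less_conc_iff:
  "alt_less (w \<frown> x) (w \<frown> y) \<longleftrightarrow> (if even (length w) then alt_less x y else alt_less y x)"
proof (induction w arbitrary: x y)
  case (Cons a w)
  then show ?case
    using alt_less_Cons_conc_iff[of a "w \<frown> x" "w \<frown> y"] by simp
qed simp

subsection \<open>The morphism \<open>\<phi>\<close> on finite and infinite words\<close>

lemma phi_Nil [simp]: "phi [] = []"
  by (simp add: phi_def)

lemma phi_Cons [simp]: "phi (a # w) = phi_letter a @ phi w"
  by (simp add: phi_def)

lemma phi_append [simp]: "phi (w @ w') = phi w @ phi w'"
  by (simp add: phi_def)

lemma length_phi_letter: "length (phi_letter a) = (if a = 0 then 1 else 3)"
  by (cases a) auto

lemma length_phi_ge: "length w \<le> length (phi w)"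
  by (induction w) (auto simp: length_phi_letter)

lemma phi_letter_neq_Nil [simp]: "phi_letter a \<noteq> []"
  by (cases a) auto

lemma last_phi_letter: "last (phi_letter a) = (if a = 0 then 1 else 0)"
  by (cases a) auto

lemma phi_eq_Nil_iff [simp]: "phi w = [] \<longleftrightarrow> w = []"
  by (cases w) auto

lemma phi_replicate_0: "phi (replicate n 0) = replicate n 1"
  by (induction n) auto

lemma set_phi_subset: "set (phi w) \<subseteq> {0, 1}"
proof -
  have "set (phi_letter a) \<subseteq> {0, 1}" for a
    by (cases a) auto
  then show ?thesis
    by (induction w) auto
qed

lemma phi_inj_on_binary:
  assumes "set w \<subseteq> {0, 1}" "set w' \<subseteq> {0, 1}" "phi w = phi w'"
  shows "w = w'"
  using assms
proof (induction w arbitrary: w' rule: rev_induct)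
  case (snoc a w)
  then obtain w'' b where w': "w' = w'' @ [b]"
    by (metis phi_eq_Nil_iff rev_exhaust snoc_eq_iff_butlast)
  with snoc.prems have ab: "a \<in> {0, 1}" "b \<in> {0, 1}"
    and eq: "phi w @ phi_letter a = phi w'' @ phi_letter b"
    by auto
  have "last (phi_letter a) = last (phi_letter b)"
    using eq by (metis last_appendR phi_letter_neq_Nil)
  with ab have "a = b"
    by (auto simp: last_phi_letter)
  with eq have "phi w = phi w''"
    by simp
  with snoc.IH snoc.prems w' have "w = w''"
    by simp
  with \<open>a = b\<close> w' show ?case
    by simp
qed (metis phi_eq_Nil_iff)

text \<open>The image of an infinite word: its \<open>j\<close>-th letter is already determined by the first
  \<open>j + 1\<close> letters, since \<open>\<phi>\<close> is non-erasing.\<close>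
definition phi_word :: "nat word \<Rightarrow> nat word" where
  "phi_word x j = phi (prefix (Suc j) x) ! j"

lemma phi_word_nth_phi_prefix:
  assumes "j < length (phi (prefix m x))"
  shows "phi_word x j = phi (prefix m x) ! j"
proof (cases "Suc j \<le> m")
  case True
  then have "prefix m x = prefix (Suc j) x @ x [Suc j \<rightarrow> m]"
    by (metis le_add_diff_inverse subsequence_append)
  then have "phi (prefix m x) = phi (prefix (Suc j) x) @ phi (x [Suc j \<rightarrow> m])"
    by simp
  moreover have "j < length (phi (prefix (Suc j) x))"
    using length_phi_ge[of "prefix (Suc j) x"] by simp
  ultimately show ?thesis
    unfolding phi_word_def by (metis nth_append)
next
  case False
  then have "prefix (Suc j) x = prefix m x @ x [m \<rightarrow> Suc j]"
    by (metis le_add_diff_inverse nat_le_linear subsequence_append)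
  then have "phi (prefix (Suc j) x) = phi (prefix m x) @ phi (x [m \<rightarrow> Suc j])"
    by simp
  then show ?thesis
    unfolding phi_word_def using assms by (metis nth_append)
qed

lemma prefix_phi_word: "prefix (length (phi (prefix m x))) (phi_word x) = phi (prefix m x)"
  by (rule nth_equalityI) (simp_all add: phi_word_nth_phi_prefix)

lemma phi_word_conc: "phi_word (w \<frown> x) = phi w \<frown> phi_word x"
proof
  fix j
  let ?p = "prefix (Suc j) x"
  have pre: "prefix (length w + Suc j) (w \<frown> x) = w @ ?p"
    by (simp del: subseq_to_Suc)
  have "j < length (phi (prefix (length w + Suc j) (w \<frown> x)))"
    unfolding pre using length_phi_ge[of ?p] by simp
  from phi_word_nth_phi_prefix[OF this]
  have lhs: "phi_word (w \<frown> x) j = (phi w @ phi ?p) ! j"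
    by (simp only: pre phi_append)
  show "phi_word (w \<frown> x) j = (phi w \<frown> phi_word x) j"
  proof (cases "j < length (phi w)")
    case True
    then show ?thesis
      by (simp only: lhs nth_append conc_fst if_True)
  next
    case False
    have "j - length (phi w) < length (phi ?p)"
      using length_phi_ge[of ?p] by simp
    from phi_word_nth_phi_prefix[OF this] False show ?thesis
      by (simp only: lhs nth_append conc_snd[OF False] if_False)
  qed
qed

lemma phi_word_unfold: "phi_word x = phi_letter (x 0) \<frown> phi_word (suffix 1 x)"
  using phi_word_conc[of "[x 0]" "suffix 1 x"] by simp

lemma suffix_phi_word: "suffix (length (phi (prefix k x))) (phi_word x) = phi_word (suffix k x)"
  using phi_word_conc[of "prefix k x" "suffix k x"] by simp

lemma phi_word_0 [simp]: "phi_word x 0 = 1"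
proof -
  have "phi_letter a ! 0 = 1" for a
    by (cases a) auto
  then show ?thesis
    using phi_word_unfold[of x] by (metis conc_fst length_greater_0_conv phi_letter_neq_Nil)
qed

lemma prefix_Suc_eq_Cons_prefix_suffix: "prefix (Suc i) x = x 0 # prefix i (suffix 1 x)"
  by (simp add: subsequence_def map_upt_Suc del: upt_Suc)

lemma conc_fixpoint_unique:
  assumes "w \<noteq> []" "x = w \<frown> x" "y = w \<frown> y"
  shows "x = y"
proof
  fix i
  show "x i = y i"
  proof (induction i rule: less_induct)
    case (less i)
    show ?case
    proof (cases "i < length w")
      case True
      then show ?thesis
        using assms(2,3) by (metis conc_fst)
    next
      case False
      with assms(1) have "i - length w < i"
        by (cases w) auto
      with less.IH False show ?thesis
        using assms(2,3) by (metis conc_snd)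
    qed
  qed
qed

lemma phi_word_iter: "q \<noteq> [] \<Longrightarrow> phi_word (q\<^sup>\<omega>) = (phi q)\<^sup>\<omega>"
  by (rule conc_fixpoint_unique[of "phi q"])
    (simp_all add: iter_unroll[symmetric] phi_word_conc[symmetric])

lemma phi_word_zeros: "phi_word (\<lambda>_. 0) = (\<lambda>_. 1)"
proof -
  have "(\<lambda>_. 0::nat) = [0]\<^sup>\<omega>" "(\<lambda>_. 1::nat) = [1]\<^sup>\<omega>"
    by auto
  then show ?thesis
    by (simp add: phi_word_iter)
qed

definition binary :: "nat word \<Rightarrow> bool" where
  "binary x \<longleftrightarrow> (\<forall>i. x i \<le> 1)"

lemma binary_suffix: "binary x \<Longrightarrow> binary (suffix k x)"
  by (simp add: binary_def)

lemma binary_phi_word: "binary (phi_word x)"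
  unfolding binary_def
proof
  fix i
  have "i < length (phi (prefix (Suc i) x))"
    using length_phi_ge[of "prefix (Suc i) x"] by simp
  then have "phi_word x i \<in> set (phi (prefix (Suc i) x))"
    unfolding phi_word_def by (rule nth_mem)
  then show "phi_word x i \<le> 1"
    using set_phi_subset by fastforce
qed

lemma phi_pow_append: "(phi ^^ m) (w @ w') = (phi ^^ m) w @ (phi ^^ m) w'"
  by (induction m) simp_all

lemma phi_pow_Nil: "(phi ^^ m) [] = []"
  by (induction m) simp_all

lemma length_phi_pow_ge: "length w \<le> length ((phi ^^ m) w)"
  by (induction m) (auto intro: order_trans[OF _ length_phi_ge])

lemma phi_pow_inj_on_binary:
  "set w \<subseteq> {0, 1} \<Longrightarrow> set w' \<subseteq> {0, 1} \<Longrightarrow> (phi ^^ m) w = (phi ^^ m) w' \<Longrightarrow> w = w'"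
proof (induction m)
  case (Suc m)
  have "set ((phi ^^ m) w) \<subseteq> {0, 1}" "set ((phi ^^ m) w') \<subseteq> {0, 1}"
    using Suc.prems(1,2) set_phi_subset by (cases m; simp)+
  with Suc show ?case
    using phi_inj_on_binary by simp
qed simp

lemma prefix_iterate_phi_word:
  "prefix (length ((phi ^^ m) (prefix j x))) ((phi_word ^^ m) x) = (phi ^^ m) (prefix j x)"
proof (induction m)
  case (Suc m)
  then show ?case
    using prefix_phi_word[where m = "length ((phi ^^ m) (prefix j x))" and x = "(phi_word ^^ m) x"]
    by simp
qed simp

subsection \<open>\<open>\<phi>\<close> and alternate Lyndon systems\<close>

lemma alt_less_phi_word:
  assumes "binary x" "binary y" "alt_less x y"
  shows "alt_less (phi_word x) (phi_word y)"
proof -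
  obtain k where "\<forall>i<k. x i = y i" "if even k then y k < x k else x k < y k"
    using assms(3) unfolding alt_less_iff by blast
  with assms(1,2) show ?thesis
  proof (induction k arbitrary: x y)
    case 0
    then have "x 0 = 1" "y 0 = 0"
      unfolding binary_def by (metis even_zero le_neq_implies_less less_one not_less0)+
    then have "phi_word x = [1, 0, 0] \<frown> phi_word (suffix 1 x)"
      and "phi_word y = [1] \<frown> phi_word (suffix 1 y)"
      by (simp_all add: phi_word_unfold[of x] phi_word_unfold[of y])
    then show ?case
      by (intro alt_lessI[of 1]) simp_all
  next
    case (Suc k)
    have "alt_less (phi_word (suffix 1 y)) (phi_word (suffix 1 x))"
      using Suc.prems by (intro Suc.IH) (auto simp: binary_def split: if_splits)
    moreover have "x 0 = y 0"
      using Suc.prems by auto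
    ultimately show ?case
      using alt_less_conc_iff[of "phi_letter (x 0)"]
      by (simp add: phi_word_unfold[of x] phi_word_unfold[of y] length_phi_letter)
  qed
qed

lemma alt_le_phi_word_iff:
  assumes "binary x" "binary y"
  shows "alt_le (phi_word x) (phi_word y) \<longleftrightarrow> alt_le x y"
  using alt_less_phi_word[OF assms] alt_less_phi_word[OF assms(2,1)]
  by (metis alt_le_def alt_less_irrefl not_alt_le_iff)

lemma alt_lyndon_iff: "x \<in> alt_lyndon d \<longleftrightarrow> (\<forall>i. x i \<le> d 0) \<and> (\<forall>k. alt_le d (suffix k x))"
  by (simp add: alt_lyndon_def suffix_def)

lemma suffix_in_alt_lyndon: "x \<in> alt_lyndon d \<Longrightarrow> suffix k x \<in> alt_lyndon d"
  by (simp add: alt_lyndon_iff)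

lemma phi_word_nonzero_block_start:
  "phi_word x k \<noteq> 0 \<Longrightarrow> \<exists>i. k = length (phi (prefix i x))"
proof (induction k arbitrary: x rule: less_induct)
  case (less k)
  define l where "l = length (phi_letter (x 0))"
  have unfold: "phi_word x = phi_letter (x 0) \<frown> phi_word (suffix 1 x)"
    by (rule phi_word_unfold)
  consider "k = 0" | "0 < k" "k < l" | "0 < k" "l \<le> k"
    by linarith
  then show ?case
  proof cases
    case 1
    then show ?thesis
      by (intro exI[of _ 0]) simp
  next
    case 2
    then have "phi_word x k = phi_letter (x 0) ! k"
      unfolding unfold l_def by (simp only: conc_fst)
    also have "\<dots> = 0"
      using 2 by (cases "x 0") (auto simp: l_def less_Suc_eq)
    finally show ?thesis
      using less.prems by contradiction
  next
    case 3
    then have "phi_word (suffix 1 x) (k - l) \<noteq> 0"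
      using less.prems by (simp add: unfold l_def)
    moreover have "k - l < k"
      using 3 by (simp add: l_def length_phi_letter)
    ultimately obtain i where "k - l = length (phi (prefix i (suffix 1 x)))"
      using less.IH by blast
    then have "k = length (phi (prefix (Suc i) x))"
      using 3 by (simp add: prefix_Suc_eq_Cons_prefix_suffix l_def del: subseq_to_Suc)
    then show ?thesis ..
  qed
qed

lemma phi_word_in_alt_lyndon_iff:
  assumes "d 0 = 1"
  shows "phi_word x \<in> alt_lyndon d \<longleftrightarrow> (\<forall>i. alt_le d (phi_word (suffix i x)))"
proof
  assume "phi_word x \<in> alt_lyndon d"
  then show "\<forall>i. alt_le d (phi_word (suffix i x))"
    by (metis alt_lyndon_iff suffix_phi_word)
next
  assume images: "\<forall>i. alt_le d (phi_word (suffix i x))"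
  have "alt_le d (suffix k (phi_word x))" for k
  proof (cases "phi_word x k = 0")
    case True
    then show ?thesis
      using assms by (simp add: alt_le_def alt_less_of_head_less)
  next
    case False
    then obtain i where "k = length (phi (prefix i x))"
      using phi_word_nonzero_block_start by blast
    then show ?thesis
      using images by (simp add: suffix_phi_word)
  qed
  then show "phi_word x \<in> alt_lyndon d"
    using assms binary_phi_word by (simp add: alt_lyndon_iff binary_def)
qed

lemma phi_word_in_alt_lyndon_phi_word:
  assumes "binary d" "d 0 = 1" "x \<in> alt_lyndon d"
  shows "phi_word x \<in> alt_lyndon (phi_word d)"
proof -
  have "binary x"
    using assms(2,3) by (simp add: alt_lyndon_iff binary_def)
  then have "alt_le (phi_word d) (phi_word (suffix i x))" for i
    using assms by (simp add: alt_le_phi_word_iff binary_suffix alt_lyndon_iff)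
  then show ?thesis
    by (simp add: phi_word_in_alt_lyndon_iff)
qed

subsection \<open>Fekete's lemma\<close>

lemma subadditive_le_mult_add:
  fixes a :: "nat \<Rightarrow> real"
  assumes sub: "\<And>m n. a (m + n) \<le> a m + a n"
  shows "a (q * m + r) \<le> real q * a m + a r"
proof (induction q)
  case (Suc q)
  have "a (Suc q * m + r) \<le> a m + a (q * m + r)"
    using sub[of m "q * m + r"] by (simp add: add.assoc)
  with Suc show ?case
    by (simp add: algebra_simps)
qed simp

lemma subadditive_quotient_le:
  fixes a :: "nat \<Rightarrow> real"
  assumes sub: "\<And>m n. a (m + n) \<le> a m + a n" and nonneg: "\<And>n. 0 \<le> a n"
    and "0 < m" "0 < n"
  shows "a n / n \<le> a m / m + (\<Sum>i<m. a i) / n"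
proof -
  define q where "q = n div m"
  have "a n \<le> real q * a m + a (n mod m)"
    using subadditive_le_mult_add[of a q m "n mod m", OF sub] by (simp add: q_def)
  also have "a (n mod m) \<le> (\<Sum>i<m. a i)"
    using \<open>0 < m\<close> nonneg by (intro member_le_sum) auto
  also have "real q * a m \<le> real n * (a m / m)"
  proof -
    have "real q * real m \<le> real n"
      unfolding q_def by (metis div_times_less_eq_dividend of_nat_le_iff of_nat_mult)
    then have "(real q * real m) * (a m / m) \<le> real n * (a m / m)"
      using nonneg[of m] by (intro mult_right_mono) simp_all
    then show ?thesis
      using \<open>0 < m\<close> by (simp add: field_simps)
  qed
  finally show ?thesis
    using \<open>0 < n\<close> by (simp add: field_simps)
qed

lemma fekete_subadditive:
  fixes a :: "nat \<Rightarrow> real"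
  assumes sub: "\<And>m n. a (m + n) \<le> a m + a n" and nonneg: "\<And>n. 0 \<le> a n"
  shows "(\<lambda>n. a n / n) \<longlonglongrightarrow> (INF n\<in>{0<..}. a n / n)"
proof -
  define h where "h = (INF n\<in>{0<..}. a n / n)"
  have bdd: "bdd_below ((\<lambda>n. a n / n) ` {0<..})"
    using nonneg by (intro bdd_belowI2[of _ 0]) simp
  show ?thesis
    unfolding h_def[symmetric]
  proof (rule order_tendstoI)
    fix y
    assume "y < h"
    then have "y < a n / n" if "0 < n" for n
      using cINF_lower[OF bdd, of n] that by (simp add: h_def)
    then show "\<forall>\<^sub>F n in sequentially. y < a n / n"
      by (intro eventually_sequentiallyI[of 1]) simp
  next
    fix y
    assume "h < y"
    then have "h < (h + y) / 2"
      by simp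
    then obtain m where m: "0 < m" "a m / m < (h + y) / 2"
      unfolding h_def by (subst (asm) cINF_less_iff[OF _ bdd]) auto
    have "(\<lambda>n. (\<Sum>i<m. a i) / real n) \<longlonglongrightarrow> 0"
      by (rule real_tendsto_divide_at_top[OF tendsto_const filterlim_real_sequentially])
    then have "\<forall>\<^sub>F n in sequentially. (\<Sum>i<m. a i) / real n < (y - h) / 2"
      using \<open>h < y\<close> by (intro order_tendstoD) auto
    moreover have "\<forall>\<^sub>F n in sequentially. 0 < n"
      by (rule eventually_gt_at_top)
    ultimately show "\<forall>\<^sub>F n in sequentially. a n / n < y"
    proof eventually_elim
      case (elim n)
      then show ?case
        using subadditive_quotient_le[OF sub nonneg \<open>0 < m\<close> \<open>0 < n\<close>] m(2) by argo
    qed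
  qed
qed

subsection \<open>Entropy of shift-invariant sets of words\<close>

locale shift_invariant =
  fixes M :: "nat word set" and c :: nat
  assumes suffix_closed: "x \<in> M \<Longrightarrow> suffix k x \<in> M"
    and letters_le: "x \<in> M \<Longrightarrow> x i \<le> c"
    and nonempty: "M \<noteq> {}"
begin

lemma factors_eq_prefixes: "factors M n = (\<lambda>x. prefix n x) ` M"
proof -
  have "prefix n (suffix k x) = map (\<lambda>i. x (k + i)) [0..<n]" for x :: "nat word" and k
    by (simp add: subsequence_def)
  then have "factors M n = {prefix n (suffix k x) | x k. x \<in> M}"
    unfolding factors_def by auto
  also have "\<dots> = (\<lambda>x. prefix n x) ` M"
    using suffix_closed by (auto simp del: subsequence_shift) (metis suffix_0)
  finally show ?thesis .
qed

lemma factors_subset_lists: "factors M n \<subseteq> {w. set w \<subseteq> {0..c} \<and> length w = n}"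
  using letters_le by (auto simp: factors_eq_prefixes)

lemma finite_factors: "finite (factors M n)"
  using factors_subset_lists by (rule finite_subset) (simp add: finite_lists_length_eq)

lemma card_factors_le: "card (factors M n) \<le> Suc c ^ n"
proof -
  have "card (factors M n) \<le> card {w. set w \<subseteq> {0..c} \<and> length w = n}"
    using factors_subset_lists by (rule card_mono[rotated]) (simp add: finite_lists_length_eq)
  then show ?thesis
    by (simp add: card_lists_length_eq)
qed

lemma card_factors_pos: "0 < card (factors M n)"
  using nonempty finite_factors by (auto simp: factors_eq_prefixes card_gt_0_iff)

lemma card_factors_add_le:
  "card (factors M (m + n)) \<le> card (factors M m) * card (factors M n)"
proof -
  have "factors M (m + n) \<subseteq> (\<lambda>(w, w'). w @ w') ` (factors M m \<times> factors M n)"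
  proof
    fix w
    assume "w \<in> factors M (m + n)"
    then obtain x where x: "x \<in> M" "w = prefix (m + n) x"
      by (auto simp: factors_eq_prefixes)
    then have "w = prefix m x @ prefix n (suffix m x)"
      by (simp add: subsequence_append)
    moreover have "prefix m x \<in> factors M m" "prefix n (suffix m x) \<in> factors M n"
      using x suffix_closed unfolding factors_eq_prefixes by (blast, blast)
    ultimately show "w \<in> (\<lambda>(w, w'). w @ w') ` (factors M m \<times> factors M n)"
      by force
  qed
  then have "card (factors M (m + n)) \<le> card (factors M m \<times> factors M n)"
    by (meson card_image_le card_mono finite_SigmaI finite_factors finite_imageI order_trans)
  then show ?thesis
    by (simp add: card_cartesian_product)
qed

lemma entropy_tends_Inf:
  "entropy_tends M (INF n\<in>{0<..}. ln (card (factors M n)) / n)"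
  unfolding entropy_tends_def
proof (rule fekete_subadditive)
  fix m n
  have pos: "0 < real (card (factors M k))" for k
    using card_factors_pos by simp
  have "real (card (factors M (m + n))) \<le> real (card (factors M m)) * card (factors M n)"
    using card_factors_add_le by (metis of_nat_le_iff of_nat_mult)
  then have "ln (card (factors M (m + n))) \<le> ln (real (card (factors M m)) * card (factors M n))"
    using pos by simp
  also have "\<dots> = ln (card (factors M m)) + ln (card (factors M n))"
    using pos by (intro ln_mult_pos)
  finally show "ln (card (factors M (m + n))) \<le> ln (card (factors M m)) + ln (card (factors M n))" .
qed (use card_factors_pos in \<open>simp add: Suc_le_eq\<close>)

lemma entropy_pos_if_exponential_growth:
  assumes "0 < L" and growth: "\<And>k. 2 ^ k \<le> card (factors M (k * L))"
  shows "\<exists>h>0. entropy_tends M h"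
proof (intro exI conjI)
  let ?a = "\<lambda>n. ln (card (factors M n)) / n"
  let ?h = "INF n\<in>{0<..}. ?a n"
  have "(?a \<circ> (\<lambda>k. Suc k * L)) \<longlonglongrightarrow> ?h"
    using entropy_tends_Inf \<open>0 < L\<close> unfolding entropy_tends_def
    by (intro LIMSEQ_subseq_LIMSEQ) (auto intro: strict_monoI)
  moreover have "ln 2 / L \<le> (?a \<circ> (\<lambda>k. Suc k * L)) k" for k
  proof -
    have "Suc k * ln 2 = ln (2 ^ Suc k)"
      using ln_realpow[of 2 "Suc k"] by simp
    also have "\<dots> \<le> ln (card (factors M (Suc k * L)))"
      using growth[of "Suc k"] card_factors_pos[of "Suc k * L"]
      by (metis ln_le_cancel_iff numeral_power_le_of_nat_cancel_iff of_nat_0_less_iff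
          zero_less_numeral zero_less_power)
    finally have "real (Suc k) * ln 2 / (real (Suc k) * real L)
        \<le> ln (card (factors M (Suc k * L))) / (real (Suc k) * real L)"
      by (intro divide_right_mono) simp_all
    moreover have "real (Suc k) * ln 2 / (real (Suc k) * real L) = ln 2 / real L"
      by (rule mult_divide_mult_cancel_left) simp
    ultimately show ?thesis
      by (simp only: o_def of_nat_mult)
  qed
  ultimately have "ln 2 / L \<le> ?h"
    by (intro LIMSEQ_le_const) auto
  moreover have "0 < ln 2 / L"
    using \<open>0 < L\<close> by simp
  ultimately show "0 < ?h"
    by linarith
qed (rule entropy_tends_Inf)

end

lemma shift_invariant_alt_lyndon:
  assumes "x \<in> alt_lyndon d"
  shows "shift_invariant (alt_lyndon d) (d 0)"
proof
  show "suffix k y \<in> alt_lyndon d" if "y \<in> alt_lyndon d" for y k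
    using that by (rule suffix_in_alt_lyndon)
  show "y i \<le> d 0" if "y \<in> alt_lyndon d" for y i
    using that by (simp add: alt_lyndon_iff)
  show "alt_lyndon d \<noteq> {}"
    using assms by blast
qed

subsection \<open>Positive entropy of \<open>M(u\<^sub>n v\<^sub>n v\<^sub>n \<dots>)\<close>\<close>

text \<open>The seed \<open>u\<^sub>0 v\<^sub>0 v\<^sub>0 \<dots> = 1000\<dots>\<close> of the words
  \<open>u\<^sub>n v\<^sub>n v\<^sub>n \<dots> = \<phi>\<^sup>n(1000\<dots>)\<close>.\<close>
definition one_zeros :: "nat word" where
  "one_zeros = [1] \<frown> (\<lambda>_. 0)"

lemma one_zeros_0 [simp]: "one_zeros 0 = 1"
  and one_zeros_Suc [simp]: "one_zeros (Suc i) = 0"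
  by (simp_all add: one_zeros_def)

lemma binary_one_zeros: "binary one_zeros"
  unfolding binary_def by (metis le_refl not0_implies_Suc one_zeros_0 one_zeros_Suc zero_le)

lemma alt_less_one_zeros_phi_word: "alt_less one_zeros (phi_word x)"
proof (cases "x 0 = 0")
  case True
  then have "phi_word x = [1] \<frown> phi_word (suffix 1 x)"
    by (simp add: phi_word_unfold[of x])
  then show ?thesis
    by (intro alt_lessI[of 1]) simp_all
next
  case False
  then have "phi_word x = [1, 0, 0] \<frown> phi_word (suffix 1 x)"
    by (cases "x 0") (simp_all add: phi_word_unfold[of x])
  then show ?thesis
    by (intro alt_lessI[of 3]) (auto simp: less_Suc_eq numeral_3_eq_3)
qed

lemma iterate_phi_word_in_alt_lyndon:
  "(phi_word ^^ Suc n) x \<in> alt_lyndon ((phi_word ^^ n) one_zeros)"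
proof (induction n)
  case 0
  then show ?case
    by (simp add: phi_word_in_alt_lyndon_iff alt_le_def alt_less_one_zeros_phi_word)
next
  case (Suc n)
  have "binary ((phi_word ^^ n) one_zeros)" "(phi_word ^^ n) one_zeros 0 = 1"
    by (cases n; simp add: binary_one_zeros binary_phi_word)+
  from phi_word_in_alt_lyndon_phi_word[OF this Suc.IH] show ?case
    by simp
qed

lemma eventually_periodic_eq_conc_iter:
  "q \<noteq> [] \<Longrightarrow> eventually_periodic p q = p \<frown> q\<^sup>\<omega>"
  by (simp add: eventually_periodic_def conc_def fun_eq_iff)

lemma u_Suc: "u (Suc n) = phi (u n)"
  by (simp add: u_def)

lemma v_Suc: "v (Suc n) = phi (v n)"
  by (cases n) (simp_all add: v_def u_def)

lemma v_neq_Nil: "v n \<noteq> []"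
  by (induction n) (simp_all add: v_Suc, simp add: v_def)

lemma eventually_periodic_u_v: "eventually_periodic (u n) (v n) = (phi_word ^^ n) one_zeros"
proof (induction n)
  case 0
  have "[0, 0]\<^sup>\<omega> = (\<lambda>_::nat. 0::nat)"
    using less_2_cases_iff by (fastforce simp: nth_Cons')
  then show ?case
    by (simp add: eventually_periodic_eq_conc_iter one_zeros_def u_def v_def)
next
  case (Suc n)
  have "eventually_periodic (u (Suc n)) (v (Suc n)) = phi_word (eventually_periodic (u n) (v n))"
    using v_neq_Nil[of n] v_neq_Nil[of "Suc n"]
    by (simp add: eventually_periodic_eq_conc_iter phi_word_conc phi_word_iter u_Suc v_Suc)
  with Suc.IH show ?case
    by simp
qed

text \<open>Each letter \<open>a\<close> is encoded by the pair \<open>a (1 - a)\<close>; for a binary word all encoded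
  letters then have images of the same length under every power of \<open>\<phi>\<close>.\<close>
definition dual_rail :: "nat list \<Rightarrow> nat list" where
  "dual_rail w = concat (map (\<lambda>a. [a, 1 - a]) w)"

lemma dual_rail_Cons [simp]: "dual_rail (a # w) = a # (1 - a) # dual_rail w"
  by (simp add: dual_rail_def)

lemma dual_rail_Nil [simp]: "dual_rail [] = []"
  by (simp add: dual_rail_def)

lemma inj_dual_rail: "inj dual_rail"
proof (rule injI)
  show "dual_rail w = dual_rail w' \<Longrightarrow> w = w'" for w w'
    by (induction w arbitrary: w') (case_tac w'; simp)+
qed

lemma set_dual_rail_subset: "set w \<subseteq> {0, 1} \<Longrightarrow> set (dual_rail w) \<subseteq> {0, 1}"
  by (induction w) auto

lemma length_phi_pow_dual_rail:
  "set w \<subseteq> {0, 1} \<Longrightarrow> length ((phi ^^ m) (dual_rail w)) = length w * length ((phi ^^ m) [0, 1])"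
proof (induction w)
  case (Cons a w)
  have "length ((phi ^^ m) [a, 1 - a]) = length ((phi ^^ m) [0, 1])"
    using Cons.prems phi_pow_append[of m "[0]" "[1]"] phi_pow_append[of m "[1]" "[0]"] by auto
  with Cons show ?case
    using phi_pow_append[of m "[a, 1 - a]" "dual_rail w"] by simp
qed (simp add: phi_pow_Nil)

lemma card_factors_iterate_ge:
  fixes n k :: nat
  defines "L \<equiv> length ((phi ^^ Suc n) [0, 1])"
  shows "2 ^ k \<le> card (factors (alt_lyndon ((phi_word ^^ n) one_zeros)) (k * L))"
proof -
  let ?M = "alt_lyndon ((phi_word ^^ n) one_zeros)"
  let ?W = "{w :: nat list. set w \<subseteq> {0, 1} \<and> length w = k}"
  let ?f = "\<lambda>w. (phi ^^ Suc n) (dual_rail w)"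
  interpret shift_invariant ?M "(phi_word ^^ n) one_zeros 0"
    using iterate_phi_word_in_alt_lyndon by (rule shift_invariant_alt_lyndon)
  have into: "?f ` ?W \<subseteq> factors ?M (k * L)"
  proof (rule image_subsetI)
    fix w
    assume "w \<in> ?W"
    let ?x = "dual_rail w \<frown> (\<lambda>_. 0)"
    have "?f w = prefix (length (?f w)) ((phi_word ^^ Suc n) ?x)"
      using prefix_iterate_phi_word[where m = "Suc n" and j = "length (dual_rail w)" and x = ?x]
      by simp
    moreover have "length (?f w) = k * L"
      using \<open>w \<in> ?W\<close> length_phi_pow_dual_rail[of w "Suc n"] unfolding L_def
      by (simp del: funpow.simps)
    ultimately show "?f w \<in> factors ?M (k * L)"
      using iterate_phi_word_in_alt_lyndon unfolding factors_eq_prefixes by fastforce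
  qed
  have "inj_on ?f ?W"
    using phi_pow_inj_on_binary set_dual_rail_subset inj_dual_rail
    by (intro inj_onI) (metis (no_types, lifting) injD mem_Collect_eq)
  then have "card ?W \<le> card (factors ?M (k * L))"
    using into finite_factors by (rule card_inj_on_le)
  moreover have "card ?W = 2 ^ k"
    using card_lists_length_eq[of "{0, 1 :: nat}" k] by (simp add: numeral_2_eq_2)
  ultimately show ?thesis
    by simp
qed

lemma entropy_pos_u_v: "\<exists>h>0. entropy_tends (alt_lyndon (eventually_periodic (u n) (v n))) h"
proof -
  interpret shift_invariant "alt_lyndon ((phi_word ^^ n) one_zeros)" "(phi_word ^^ n) one_zeros 0"
    using iterate_phi_word_in_alt_lyndon by (rule shift_invariant_alt_lyndon)
  have "0 < length ((phi ^^ Suc n) [0, 1])"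
    by (rule less_le_trans[OF _ length_phi_pow_ge]) simp
  then show ?thesis
    unfolding eventually_periodic_u_v
    by (rule entropy_pos_if_exponential_growth[OF _ card_factors_iterate_ge])
qed

lemma u_0: "u 0 = [1]"
  by (simp add: u_def)

lemma u_Cons: "\<exists>r. u n = 1 # r"
  by (induction n) (auto simp: u_0 u_Suc)

lemma length_u: "Suc n \<le> length (u n)"
proof (induction n)
  case (Suc n)
  obtain r where "u n = 1 # r"
    using u_Cons by blast
  then show ?case
    using Suc length_phi_ge[of r] by (simp add: u_Suc)
qed (simp add: u_0)

lemma u_Suc_append: "\<exists>r. u (Suc n) = u n @ r"
proof (induction n)
  case 0
  then show ?case
    by (simp add: u_Suc u_0)
next
  case (Suc n)
  then show ?case
    by (metis phi_append u_Suc)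
qed

lemma u_append: "n \<le> m \<Longrightarrow> \<exists>r. u m = u n @ r"
proof (induction m rule: dec_induct)
  case (step m)
  then show ?case
    using u_Suc_append[of m] by (metis append.assoc)
qed simp

lemma phi_inf_eq_nth_u: "i < length (u m) \<Longrightarrow> phi_inf i = u m ! i"
proof -
  assume i: "i < length (u m)"
  have i': "i < length (u (Suc i))"
    using length_u[of "Suc i"] by simp
  show ?thesis
  proof (cases "Suc i \<le> m")
    case True
    with i' show ?thesis
      using u_append by (metis nth_append phi_inf_def)
  next
    case False
    with i show ?thesis
      using u_append[of m "Suc i"] by (metis nat_le_linear nth_append phi_inf_def)
  qed
qed

lemma prefix_phi_inf: "prefix (length (u m)) phi_inf = u m"
  by (rule nth_equalityI) (simp_all add: phi_inf_eq_nth_u)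

lemma phi_word_phi_inf: "phi_word phi_inf = phi_inf"
proof
  fix j
  have "j < length (u (Suc j))"
    using length_u[of "Suc j"] by simp
  then have "j < length (phi (prefix (length (u j)) phi_inf))"
    by (simp add: prefix_phi_inf u_Suc)
  from phi_word_nth_phi_prefix[OF this] have "phi_word phi_inf j = u (Suc j) ! j"
    by (simp add: prefix_phi_inf u_Suc)
  also have "\<dots> = phi_inf j"
    using \<open>j < length (u (Suc j))\<close> by (simp add: phi_inf_eq_nth_u)
  finally show "phi_word phi_inf j = phi_inf j" .
qed

lemma phi_inf_0: "phi_inf 0 = 1" and phi_inf_1: "phi_inf 1 = 0"
  and phi_inf_2: "phi_inf 2 = 0" and phi_inf_3: "phi_inf 3 = 1"
proof -
  have "u 2 = [1, 0, 0, 1, 1]"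
    by (simp add: u_def numeral_2_eq_2)
  then show "phi_inf 0 = 1" "phi_inf 1 = 0" "phi_inf 2 = 0" "phi_inf 3 = 1"
    using phi_inf_eq_nth_u[of _ 2] by simp_all
qed

lemma binary_phi_inf: "binary phi_inf"
  using binary_phi_word[of phi_inf] by (simp add: phi_word_phi_inf)

subsection \<open>Zero entropy of \<open>M(\<phi>\<^sup>\<infinity>(1))\<close>\<close>

lemma zeros_in_alt_lyndon_phi_inf: "(\<lambda>_. 0) \<in> alt_lyndon phi_inf"
  by (simp add: alt_lyndon_iff alt_le_def alt_less_of_head_less phi_inf_0)

interpretation alt_lyndon_phi_inf: shift_invariant "alt_lyndon phi_inf" "phi_inf 0"
  using zeros_in_alt_lyndon_phi_inf by (rule shift_invariant_alt_lyndon)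

lemma binary_if_in_alt_lyndon_phi_inf: "x \<in> alt_lyndon phi_inf \<Longrightarrow> binary x"
  by (simp add: alt_lyndon_iff binary_def phi_inf_0)

text \<open>This is where \<open>\<phi>\<^sup>\<infinity>(1) = 1001\<dots>\<close> enters: it makes the greedy parsing below
  possible.\<close>
lemma alt_lyndon_phi_inf_1_0:
  assumes x: "x \<in> alt_lyndon phi_inf" and "x 0 = 1" "x 1 = 0"
  shows "x 2 = 0" "x 3 = 1"
proof -
  have "alt_le phi_inf x"
    using x by (metis alt_lyndon_iff suffix_0)
  then consider "x = phi_inf" | k where "\<forall>i<k. phi_inf i = x i"
    "if even k then x k < phi_inf k else phi_inf k < x k"
    unfolding alt_le_def alt_less_iff by blast
  then have "x 2 = 0 \<and> x 3 = 1"
  proof cases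
    case (2 k)
    have "x 3 \<le> 1"
      using binary_if_in_alt_lyndon_phi_inf[OF x] by (simp add: binary_def)
    have "k \<noteq> 0" "k \<noteq> 1" "k \<noteq> 2" "k \<noteq> 3"
      using 2(2) assms(2,3) \<open>x 3 \<le> 1\<close> phi_inf_0 phi_inf_1 phi_inf_2 phi_inf_3
      by (intro notI; simp)+
    then have "2 < k" "3 < k"
      by linarith+
    with 2(1) show ?thesis
      by (metis phi_inf_2 phi_inf_3)
  qed (simp add: phi_inf_2 phi_inf_3)
  then show "x 2 = 0" "x 3 = 1"
    by simp_all
qed

text \<open>Greedy parsing of a word into blocks \<open>1 = \<phi>(0)\<close> and \<open>100 = \<phi>(1)\<close>: the position
  of the \<open>i\<close>-th block, and the letter it encodes.\<close>
fun phi_block_start :: "nat word \<Rightarrow> nat \<Rightarrow> nat" where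
  "phi_block_start x 0 = 0"
| "phi_block_start x (Suc i) =
    phi_block_start x i + (if x (phi_block_start x i + 1) = 1 then 1 else 3)"

definition phi_decode :: "nat word \<Rightarrow> nat word" where
  "phi_decode x i = (if x (phi_block_start x i + 1) = 1 then 0 else 1)"

lemma phi_block_start_ge: "i \<le> phi_block_start x i"
  by (induction i) auto

lemma binary_phi_decode: "binary (phi_decode x)"
  by (simp add: binary_def phi_decode_def)

lemma prefix_phi_block_start:
  assumes x: "x \<in> alt_lyndon phi_inf" and "x 0 = 1"
  shows "x (phi_block_start x i) = 1 \<and>
    prefix (phi_block_start x i) x = phi (prefix i (phi_decode x))"
proof (induction i)
  case 0
  then show ?case
    using \<open>x 0 = 1\<close> by simp
next
  case (Suc i)
  define p where "p = phi_block_start x i"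
  have xp: "x p = 1" and pre: "prefix p x = phi (prefix i (phi_decode x))"
    using Suc unfolding p_def by auto
  have decode: "phi_decode x i = (if x (p + 1) = 1 then 0 else 1)"
    by (simp add: phi_decode_def p_def)
  show ?case
  proof (cases "x (p + 1) = 1")
    case True
    then show ?thesis
      using xp pre decode by (simp add: p_def[symmetric])
  next
    case False
    moreover have "x (p + 1) \<le> 1"
      using binary_if_in_alt_lyndon_phi_inf[OF x] by (simp add: binary_def)
    ultimately have "x (p + 1) = 0"
      by simp
    moreover have "x (p + 2) = 0" "x (p + 3) = 1"
      using alt_lyndon_phi_inf_1_0[OF suffix_in_alt_lyndon[OF x, of p]] xp \<open>x (p + 1) = 0\<close>
      by simp_all
    ultimately show ?thesis
      using False xp pre decode by (simp add: p_def[symmetric] numeral_3_eq_3 numeral_2_eq_2)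
  qed
qed

lemma phi_word_phi_decode:
  assumes "x \<in> alt_lyndon phi_inf" and "x 0 = 1"
  shows "phi_word (phi_decode x) = x"
proof
  fix j
  let ?p = "phi_block_start x (Suc j)"
  have "j < ?p"
    using phi_block_start_ge[of "Suc j" x] by simp
  moreover have pre: "prefix ?p x = phi (prefix (Suc j) (phi_decode x))"
    using prefix_phi_block_start[OF assms] by blast
  ultimately have "j < length (phi (prefix (Suc j) (phi_decode x)))"
    by (metis diff_zero subsequence_length)
  from phi_word_nth_phi_prefix[OF this] show "phi_word (phi_decode x) j = x j"
    using \<open>j < ?p\<close> by (simp flip: pre del: subseq_to_Suc)
qed

lemma phi_word_in_alt_lyndon_phi_inf_iff:
  assumes "binary y"
  shows "phi_word y \<in> alt_lyndon phi_inf \<longleftrightarrow> y \<in> alt_lyndon phi_inf"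
proof -
  have "phi_word y \<in> alt_lyndon phi_inf \<longleftrightarrow> (\<forall>i. alt_le phi_inf (phi_word (suffix i y)))"
    by (simp add: phi_word_in_alt_lyndon_iff phi_inf_0)
  also have "\<dots> \<longleftrightarrow> (\<forall>i. alt_le phi_inf (suffix i y))"
    using alt_le_phi_word_iff[OF binary_phi_inf binary_suffix[OF assms]]
    by (simp add: phi_word_phi_inf)
  also have "\<dots> \<longleftrightarrow> y \<in> alt_lyndon phi_inf"
    using assms by (simp add: alt_lyndon_iff binary_def phi_inf_0)
  finally show ?thesis .
qed

lemma alt_lyndon_phi_inf_decompose:
  assumes x: "x \<in> alt_lyndon phi_inf" and "x \<noteq> (\<lambda>_. 0)"
  obtains a y where "y \<in> alt_lyndon phi_inf" "x = replicate a 0 \<frown> phi_word y"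
proof -
  have "\<exists>i. x i \<noteq> 0"
    using \<open>x \<noteq> (\<lambda>_. 0)\<close> by auto
  define a where "a = (LEAST i. x i \<noteq> 0)"
  have "x a \<noteq> 0"
    unfolding a_def using \<open>\<exists>i. x i \<noteq> 0\<close> by (rule LeastI_ex)
  moreover have "x a \<le> 1"
    using binary_if_in_alt_lyndon_phi_inf[OF x] by (simp add: binary_def)
  ultimately have "suffix a x 0 = 1"
    by simp
  moreover have sx: "suffix a x \<in> alt_lyndon phi_inf"
    using x by (rule suffix_in_alt_lyndon)
  ultimately have y: "phi_word (phi_decode (suffix a x)) = suffix a x"
    by (rule phi_word_phi_decode[rotated])
  have "prefix a x = replicate a 0"
    using not_less_Least unfolding a_def by (intro nth_equalityI) auto
  then have "x = replicate a 0 \<frown> phi_word (phi_decode (suffix a x))"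
    by (metis prefix_suffix y)
  moreover have "phi_decode (suffix a x) \<in> alt_lyndon phi_inf"
    using sx y binary_phi_decode by (metis phi_word_in_alt_lyndon_phi_inf_iff)
  ultimately show ?thesis
    using that by blast
qed

lemma alt_lyndon_phi_inf_cases:
  assumes "x \<in> alt_lyndon phi_inf"
  obtains "x = (\<lambda>_. 0)"
  | a where "x = replicate a 0 \<frown> (\<lambda>_. 1)"
  | a b z where "z \<in> alt_lyndon phi_inf" "x = replicate a 0 \<frown> replicate b 1 \<frown> phi_word (phi_word z)"
proof (cases "x = (\<lambda>_. 0)")
  case False
  with assms obtain a y where y: "y \<in> alt_lyndon phi_inf" "x = replicate a 0 \<frown> phi_word y"
    by (rule alt_lyndon_phi_inf_decompose)
  show ?thesis
  proof (cases "y = (\<lambda>_. 0)")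
    case True
    with y that(2) show ?thesis
      by (simp add: phi_word_zeros)
  next
    case False
    with y(1) obtain b z where "z \<in> alt_lyndon phi_inf" "y = replicate b 0 \<frown> phi_word z"
      by (rule alt_lyndon_phi_inf_decompose)
    with y that(3) show ?thesis
      by (simp add: phi_word_conc phi_replicate_0)
  qed
qed

lemma prefix_conc_eq_take: "prefix n (w \<frown> x) = take n (w @ prefix n x)"
  by (cases "n \<le> length w") (simp_all add: take_append)

lemma prefix_const: "prefix n (\<lambda>_. c) = replicate n c"
  by (simp add: subsequence_def map_replicate_const)

lemma length_phi_phi_ge: "3 * length w \<le> length (phi (phi w))"
proof (induction w)
  case (Cons a w)
  have "3 \<le> length (phi (phi_letter a))"
    by (cases a) simp_all
  with Cons show ?case
    by simp
qed simp

lemma prefix_phi_word_phi_word: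
  "prefix n (phi_word (phi_word z)) = take n (phi (phi (prefix ((n + 2) div 3) z)))"
proof -
  let ?w = "phi (phi (prefix ((n + 2) div 3) z))"
  have "n \<le> length ?w"
    using length_phi_phi_ge[of "prefix ((n + 2) div 3) z"] by simp
  then have "prefix n (phi_word (phi_word z)) = take n (prefix (length ?w) ((phi_word ^^ 2) z))"
    by (simp add: numeral_2_eq_2)
  also have "\<dots> = take n ?w"
    using prefix_iterate_phi_word[where m = 2] by (simp add: numeral_2_eq_2)
  finally show ?thesis .
qed

lemma factors_alt_lyndon_phi_inf_subset:
  "factors (alt_lyndon phi_inf) n \<subseteq>
    (\<lambda>(a, b, w). take n (replicate a 0 @ replicate b 1 @ phi (phi w))) `
      ({..n} \<times> {..n} \<times> factors (alt_lyndon phi_inf) ((n + 2) div 3))"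
    (is "_ \<subseteq> ?G ` ({..n} \<times> {..n} \<times> ?F)")
proof
  fix w
  assume "w \<in> factors (alt_lyndon phi_inf) n"
  then obtain x where x: "x \<in> alt_lyndon phi_inf" "w = prefix n x"
    by (auto simp: alt_lyndon_phi_inf.factors_eq_prefixes)
  let ?w0 = "prefix ((n + 2) div 3) (\<lambda>_. 0)"
  have w0: "?w0 \<in> ?F"
    using zeros_in_alt_lyndon_phi_inf by (auto simp: alt_lyndon_phi_inf.factors_eq_prefixes)
  from x(1) show "w \<in> ?G ` ({..n} \<times> {..n} \<times> ?F)"
  proof (cases rule: alt_lyndon_phi_inf_cases)
    case 1
    then have "w = ?G (n, 0, ?w0)"
      using x(2) by (simp add: prefix_const)
    then show ?thesis
      by (rule image_eqI) (use w0 in auto)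
  next
    case (2 a)
    then have "w = take n (replicate a 0 @ replicate n 1)"
      using x(2) by (simp add: prefix_conc_eq_take prefix_const)
    also have "\<dots> = ?G (min a n, n, ?w0)"
      by (simp add: take_append min_def)
    finally show ?thesis
      by (rule image_eqI) (use w0 in auto)
  next
    case (3 a b z)
    have "w = take n (replicate a 0 @ replicate b 1 @ phi (phi (prefix ((n + 2) div 3) z)))"
      using x(2) 3(2) by (simp add: prefix_conc_eq_take prefix_phi_word_phi_word take_append)
    also have "\<dots> = ?G (min a n, min b n, prefix ((n + 2) div 3) z)"
      by (simp add: take_append min_def) linarith
    finally show ?thesis
      by (rule image_eqI) (use 3(1) in \<open>auto simp: alt_lyndon_phi_inf.factors_eq_prefixes\<close>)
  qed
qed

lemma card_factors_alt_lyndon_phi_inf_le: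
  "card (factors (alt_lyndon phi_inf) n)
    \<le> (n + 1) ^ 2 * card (factors (alt_lyndon phi_inf) ((n + 2) div 3))"
proof -
  let ?D = "{..n} \<times> {..n} \<times> factors (alt_lyndon phi_inf) ((n + 2) div 3)"
  have "card (factors (alt_lyndon phi_inf) n) \<le> card ?D"
    by (rule surj_card_le[OF _ factors_alt_lyndon_phi_inf_subset])
      (simp add: alt_lyndon_phi_inf.finite_factors)
  also have "\<dots> = (n + 1) ^ 2 * card (factors (alt_lyndon phi_inf) ((n + 2) div 3))"
    by (simp only: card_cartesian_product card_atMost power2_eq_square Suc_eq_plus1 mult.assoc)
  finally show ?thesis .
qed

lemma card_factors_alt_lyndon_phi_inf_poly:
  "n \<le> 3 ^ k \<Longrightarrow> card (factors (alt_lyndon phi_inf) n) \<le> 2 * (n + 1) ^ (2 * k)"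
proof (induction k arbitrary: n)
  case 0
  from 0 have "Suc (phi_inf 0) ^ n \<le> 2"
    by (cases n) (simp_all add: phi_inf_0)
  with alt_lyndon_phi_inf.card_factors_le[of n] show ?case
    by simp
next
  case (Suc k)
  let ?c = "(n + 2) div 3"
  have "card (factors (alt_lyndon phi_inf) n)
      \<le> (n + 1) ^ 2 * card (factors (alt_lyndon phi_inf) ?c)"
    by (rule card_factors_alt_lyndon_phi_inf_le)
  also have "\<dots> \<le> (n + 1) ^ 2 * (2 * (?c + 1) ^ (2 * k))"
    using Suc by simp
  also have "\<dots> \<le> (n + 1) ^ 2 * (2 * (n + 1) ^ (2 * k))"
    by (intro mult_left_mono power_mono) simp_all
  also have "\<dots> = 2 * (n + 1) ^ (2 * Suc k)"
    by (simp only: mult_Suc_right power_add mult.left_commute)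
  finally show ?case .
qed

lemma quasi_polynomial_exponent_tendsto_0:
  "(\<lambda>n. (ln 2 + 2 * (log 3 n + 1) * ln (real n + 1)) / real n) \<longlonglongrightarrow> 0"
  by real_asymp

lemma ln_card_factors_alt_lyndon_phi_inf_le:
  assumes "1 \<le> n"
  shows "ln (card (factors (alt_lyndon phi_inf) n)) \<le> ln 2 + 2 * (log 3 n + 1) * ln (real n + 1)"
proof -
  define k where "k = nat \<lceil>log 3 n\<rceil>"
  have "0 \<le> log 3 n"
    using assms by simp
  then have "real k = \<lceil>log 3 n\<rceil>"
    unfolding k_def by simp
  then have k: "log 3 n \<le> k" "k \<le> log 3 n + 1"
    by (simp_all add: le_of_int_ceiling of_int_ceiling_le_add_one)
  have "real n = 3 powr (log 3 n)"
    using assms by simp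
  also have "\<dots> \<le> 3 ^ k"
    using k(1) by (simp add: powr_realpow[symmetric])
  finally have "n \<le> 3 ^ k"
    by (simp flip: of_nat_le_iff)
  then have "real (card (factors (alt_lyndon phi_inf) n)) \<le> real (2 * (n + 1) ^ (2 * k))"
    by (simp only: of_nat_le_iff card_factors_alt_lyndon_phi_inf_poly)
  then have "ln (card (factors (alt_lyndon phi_inf) n)) \<le> ln (2 * (real n + 1) ^ (2 * k))"
    using alt_lyndon_phi_inf.card_factors_pos[of n] by (simp add: add.commute)
  also have "\<dots> = ln 2 + (2 * k) * ln (real n + 1)"
    by (simp add: ln_mult_pos ln_realpow)
  also have "\<dots> \<le> ln 2 + 2 * (log 3 n + 1) * ln (real n + 1)"
    using k(2) by (intro add_left_mono mult_right_mono) simp_all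
  finally show ?thesis .
qed

lemma entropy_zero_phi_inf: "entropy_tends (alt_lyndon phi_inf) 0"
  unfolding entropy_tends_def
proof (rule tendsto_sandwich[of "\<lambda>_. 0" _ _ "\<lambda>n. (ln 2 + 2 * (log 3 n + 1) * ln (real n + 1)) / n"])
  show "\<forall>\<^sub>F n in sequentially. 0 \<le> ln (card (factors (alt_lyndon phi_inf) n)) / n"
    using alt_lyndon_phi_inf.card_factors_pos by (simp add: Suc_le_eq)
  show "\<forall>\<^sub>F n in sequentially.
      ln (card (factors (alt_lyndon phi_inf) n)) / n
        \<le> (ln 2 + 2 * (log 3 n + 1) * ln (real n + 1)) / n"
    using ln_card_factors_alt_lyndon_phi_inf_le
    by (intro eventually_sequentiallyI[of 1] divide_right_mono) simp_all
qed (use quasi_polynomial_exponent_tendsto_0 in simp_all)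

theorem proposition5:
  shows "(\<forall>n. \<exists>h>0. entropy_tends (alt_lyndon (eventually_periodic (u n) (v n))) h)
       \<and> entropy_tends (alt_lyndon phi_inf) 0"
  using entropy_pos_u_v entropy_zero_phi_inf by blast

end
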